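(* For all integers $s\geq 1$, $A_{231,321}(K_{s,2}^\alpha)=2^{s-1}(s-1)+1$.
   Context: $K^\alpha_{s,2}$ is the poset on $[2s]$ whose order is generated by the covering relations $i\lessdot i+1$ for $1\le i\le s-1$ and $i\lessdot i+s$ for $1\le i\le s$ (the comb $K_{s,2}$ with $\alpha$-labeling $e_{i,j}\mapsto (j-1)s+i$). A linear extension is a permutation of $[2s]$ in which $x$ precedes $y$ whenever $x<y$ in the poset. $A_{231,321}(P)$ denotes the number of linear extensions of $P$ that avoid both patterns $231$ and $321$. *)

theory Defs
  imports Main
begin

text \<open>Covering relations of the comb poset K^alpha_{s,2} on [2s]:
  i covered by i+1 for 1 <= i <= s-1, and i covered by i+s for 1 <= i <= s.\<close>
definition comb_cover :: "nat \<Rightarrow> nat \<Rightarrow> nat \<Rightarrow> bool" where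
  "comb_cover s x y \<longleftrightarrow>
     (1 \<le> x \<and> x + 1 \<le> s \<and> y = x + 1) \<or> (1 \<le> x \<and> x \<le> s \<and> y = x + s)"

definition comb_less :: "nat \<Rightarrow> nat \<Rightarrow> nat \<Rightarrow> bool" where
  "comb_less s = (comb_cover s)\<^sup>+\<^sup>+"

definition linear_extensions :: "nat \<Rightarrow> (nat \<Rightarrow> nat \<Rightarrow> bool) \<Rightarrow> nat list set" where
  "linear_extensions n P = {w. distinct w \<and> set w = {1..n} \<and>
     (\<forall>i j. i < length w \<longrightarrow> j < length w \<longrightarrow> P (w ! i) (w ! j) \<longrightarrow> i < j)}"

definition contains_231 :: "nat list \<Rightarrow> bool" where
  "contains_231 w \<longleftrightarrow> (\<exists>i j k. i < j \<and> j < k \<and> k < length w \<and>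
      w ! k < w ! i \<and> w ! i < w ! j)"

definition contains_321 :: "nat list \<Rightarrow> bool" where
  "contains_321 w \<longleftrightarrow> (\<exists>i j k. i < j \<and> j < k \<and> k < length w \<and>
      w ! k < w ! j \<and> w ! j < w ! i)"

definition A_231_321 :: "nat \<Rightarrow> (nat \<Rightarrow> nat \<Rightarrow> bool) \<Rightarrow> nat" where
  "A_231_321 n P = card {w \<in> linear_extensions n P. \<not> contains_231 w \<and> \<not> contains_321 w}"

end

theory Submission
  imports Defs
begin

text \<open>A permutation avoids 231 and 321 iff no entry is smaller than two entries before it.
  Hence, in such a linear extension of a poset on [m] whose order refines the natural order,
  everything after the maximum m is increasing and exceeds everything before m: the extension is
  u m (t+1) ... (m-1) with u an extension of the same kind on [t], and the only remaining order
  condition is that none of t+1, ..., m-1 lies below m. For the comb this leaves t = m-1 when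
  m \<le> s and m-s \<le> t \<le> m-1 when s < m \<le> 2s, so the counts c(m) satisfy c(m) = 1 for m \<le> s and
  c(m) = c(m-s) + ... + c(m-1) for s < m \<le> 2s, whence c(m) = 2^(m-s-1) (s-1) + 1.\<close>

definition respects_order :: "(nat \<Rightarrow> nat \<Rightarrow> bool) \<Rightarrow> nat list \<Rightarrow> bool" where
  "respects_order P w \<longleftrightarrow>
     (\<forall>i j. i < length w \<longrightarrow> j < length w \<longrightarrow> P (w ! i) (w ! j) \<longrightarrow> i < j)"

lemma linear_extensions_eq:
  "linear_extensions n P = {w. distinct w \<and> set w = {1..n} \<and> respects_order P w}"
  unfolding linear_extensions_def respects_order_def ..

lemma respects_order_Nil [simp]: "respects_order P []"
  by (simp add: respects_order_def)

lemma respects_order_Cons: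
  "respects_order P (x # xs) \<longleftrightarrow> \<not> P x x \<and> respects_order P xs \<and> (\<forall>y\<in>set xs. \<not> P y x)"
proof
  assume r: "respects_order P (x # xs)"
  have "\<not> P x x" using r[unfolded respects_order_def, rule_format, of 0 0] by auto
  moreover have "respects_order P xs"
    unfolding respects_order_def using r[unfolded respects_order_def, rule_format, of "Suc _" "Suc _"] by simp
  moreover have "\<not> P y x" if "y \<in> set xs" for y
    using that r[unfolded respects_order_def, rule_format, of "Suc _" 0] by (auto simp: in_set_conv_nth)
  ultimately show "\<not> P x x \<and> respects_order P xs \<and> (\<forall>y\<in>set xs. \<not> P y x)" by blast
next
  assume h: "\<not> P x x \<and> respects_order P xs \<and> (\<forall>y\<in>set xs. \<not> P y x)"
  then show "respects_order P (x # xs)"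
    unfolding respects_order_def
  proof (intro allI impI)
    fix i j assume "i < length (x # xs)" "j < length (x # xs)" "P ((x # xs) ! i) ((x # xs) ! j)"
    with h show "i < j" by (cases i; cases j) (auto simp: respects_order_def)
  qed
qed

lemma respects_order_append:
  "respects_order P (xs @ ys) \<longleftrightarrow>
    respects_order P xs \<and> respects_order P ys \<and> (\<forall>x\<in>set xs. \<forall>y\<in>set ys. \<not> P y x)"
  by (induction xs) (auto simp: respects_order_Cons)

lemma respects_order_sorted:
  assumes "\<And>x y. P x y \<Longrightarrow> x < y" and "sorted xs"
  shows "respects_order P xs"
  unfolding respects_order_def
  using assms sorted_nth_mono by (metis leD not_le_imp_less)

definition avoids_231_321 :: "nat list \<Rightarrow> bool" where
  "avoids_231_321 w \<longleftrightarrow>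
     (\<forall>i j k. i < j \<longrightarrow> j < k \<longrightarrow> k < length w \<longrightarrow> \<not> (w ! k < w ! i \<and> w ! k < w ! j))"

lemma avoids_231_321_iff:
  assumes "distinct w"
  shows "\<not> contains_231 w \<and> \<not> contains_321 w \<longleftrightarrow> avoids_231_321 w"
proof
  assume no_patterns: "\<not> contains_231 w \<and> \<not> contains_321 w"
  show "avoids_231_321 w"
    unfolding avoids_231_321_def
  proof (intro allI impI notI)
    fix i j k assume "i < j" "j < k" "k < length w" "w ! k < w ! i \<and> w ! k < w ! j"
    moreover have "w ! i \<noteq> w ! j" using assms \<open>i < j\<close> \<open>j < k\<close> \<open>k < length w\<close>
      by (simp add: nth_eq_iff_index_eq)
    ultimately show False
      using no_patterns unfolding contains_231_def contains_321_def by (meson linorder_neqE_nat)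
  qed
next
  assume "avoids_231_321 w"
  then show "\<not> contains_231 w \<and> \<not> contains_321 w"
    unfolding avoids_231_321_def contains_231_def contains_321_def by (meson order.strict_trans)
qed

lemma avoids_231_321_appendD:
  assumes "avoids_231_321 (xs @ ys)"
  shows "avoids_231_321 xs"
  unfolding avoids_231_321_def
proof (intro allI impI)
  fix i j k assume "i < j" "j < k" "k < length xs"
  then show "\<not> (xs ! k < xs ! i \<and> xs ! k < xs ! j)"
    using assms[unfolded avoids_231_321_def, rule_format, of i j k] by (simp add: nth_append)
qed

lemma avoids_231_321_max_splitD:
  assumes av: "avoids_231_321 (u @ m # v)" and below: "\<forall>y\<in>set v. y < m"
  shows "sorted v" and "\<forall>x\<in>set u. \<forall>y\<in>set v. x \<le> y"
proof -
  let ?n = "length u"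
  note pattern = av[unfolded avoids_231_321_def, rule_format]
  have w_v: "(u @ m # v) ! (?n + Suc k) = v ! k" for k by (simp add: nth_append)
  show "sorted v"
    unfolding sorted_iff_nth_mono_less
  proof (intro allI impI)
    fix i j assume "i < j" "j < length v"
    then show "v ! i \<le> v ! j"
      using pattern[of ?n "?n + Suc i" "?n + Suc j"] below w_v by auto
  qed
  show "\<forall>x\<in>set u. \<forall>y\<in>set v. x \<le> y"
  proof (intro ballI)
    fix x y assume "x \<in> set u" "y \<in> set v"
    obtain i where "i < ?n" "u ! i = x" using \<open>x \<in> set u\<close> by (auto simp: in_set_conv_nth)
    moreover obtain k where "k < length v" "v ! k = y"
      using \<open>y \<in> set v\<close> by (auto simp: in_set_conv_nth)
    ultimately show "x \<le> y"
      using pattern[of i ?n "?n + Suc k"] below w_v \<open>y \<in> set v\<close> by (fastforce simp: nth_append)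
  qed
qed

lemma avoids_231_321_max_splitI:
  assumes "avoids_231_321 u" and "sorted v" and u_below_v: "\<forall>x\<in>set u. \<forall>y\<in>set v. x \<le> y"
    and below: "\<forall>x\<in>set u. x < m"
  shows "avoids_231_321 (u @ m # v)" (is "avoids_231_321 ?w")
  unfolding avoids_231_321_def
proof (intro allI impI notI)
  let ?n = "length u"
  have w_u: "?w ! i = u ! i" if "i < ?n" for i using that by (simp add: nth_append)
  have w_v: "?w ! (?n + Suc k) = v ! k" for k by (simp add: nth_append)
  fix i j k assume ijk: "i < j" "j < k" "k < length ?w"
    and smaller: "?w ! k < ?w ! i \<and> ?w ! k < ?w ! j"
  consider "k < ?n" | "k = ?n" | c where "k = ?n + Suc c" "c < length v"
  proof (cases "k \<le> ?n")
    case False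
    then have "k = ?n + Suc (k - ?n - 1)" "k - ?n - 1 < length v" using \<open>k < length ?w\<close> by auto
    then show ?thesis using that(3) by blast
  qed (use that in linarith)
  then show False
  proof cases
    case 1
    then show False using assms(1) ijk smaller w_u unfolding avoids_231_321_def by auto
  next
    case 2
    then have "?w ! i \<in> set u" using ijk w_u by simp
    then show False using smaller 2 below by auto
  next
    case (3 c)
    have "?w ! p \<le> ?w ! k" if "p < k" "p \<noteq> ?n" for p
    proof (cases "p < ?n")
      case True
      then show ?thesis using u_below_v w_u w_v 3 by auto
    next
      case False
      define d where "d = p - ?n - 1"
      have "p = ?n + Suc d" "d < c" using False \<open>p \<noteq> ?n\<close> \<open>p < k\<close> 3 by (auto simp: d_def)
      then show ?thesis using \<open>sorted v\<close> w_v 3 by (simp add: sorted_nth_mono)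
    qed
    then show False using ijk smaller by (metis leD less_trans less_not_refl)
  qed
qed

lemma avoids_231_321_max_split:
  assumes av: "avoids_231_321 (u @ m # v)" and dist: "distinct (u @ m # v)"
    and perm: "set (u @ m # v) = {1..m}"
  shows "set u = {1..length u}" and "v = [Suc (length u)..<m]"
proof -
  have "set u \<union> set v = set (u @ m # v) - {m}" using dist by auto
  also have "\<dots> = {1..<m}" unfolding perm by auto
  finally have rest: "set u \<union> set v = {1..<m}" .
  then have "\<forall>y\<in>set v. y < m" by auto
  then have "sorted v" and u_below_v: "\<forall>x\<in>set u. \<forall>y\<in>set v. x \<le> y"
    using avoids_231_321_max_splitD[OF av] by auto
  have merged: "sort u @ v = [1..<m]"
  proof (rule sorted_distinct_set_unique)
    show "sorted (sort u @ v)" using \<open>sorted v\<close> u_below_v by (simp add: sorted_append)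
    show "set (sort u @ v) = set [1..<m]" using rest by simp
    show "distinct (sort u @ v)" using dist by auto
  qed simp_all
  have "length u < m" using distinct_card[OF dist] perm by simp
  have "set u = set (take (length u) (sort u @ v))" by simp
  also have "\<dots> = {1..length u}"
    unfolding merged using \<open>length u < m\<close> by auto
  finally show "set u = {1..length u}" .
  have "v = drop (length u) (sort u @ v)" by simp
  then show "v = [Suc (length u)..<m]" unfolding merged by simp
qed

definition avoiding_extensions :: "nat \<Rightarrow> (nat \<Rightarrow> nat \<Rightarrow> bool) \<Rightarrow> nat list set" where
  "avoiding_extensions n P = {w \<in> linear_extensions n P. avoids_231_321 w}"

text \<open>The possible numbers t of entries preceding the maximum m; the entries following it are
  then t+1, ..., m-1, none of which may lie below m.\<close>

definition max_positions :: "(nat \<Rightarrow> nat \<Rightarrow> bool) \<Rightarrow> nat \<Rightarrow> nat set" where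
  "max_positions P m = {t. t < m \<and> (\<forall>y\<in>{Suc t..<m}. \<not> P y m)}"

lemma respects_order_max_split:
  assumes natural: "\<And>x y. P x y \<Longrightarrow> x < y" and u: "\<forall>x\<in>set u. x \<le> t" and "t < m"
  shows "respects_order P (u @ m # [Suc t..<m]) \<longleftrightarrow>
    respects_order P u \<and> (\<forall>y\<in>{Suc t..<m}. \<not> P y m)"
proof -
  have "\<not> P y x" if "x \<in> set u" "y \<in> set (m # [Suc t..<m])" for x y
    using that u \<open>t < m\<close> natural[of y x] by fastforce
  moreover have "\<not> P m m" using natural by blast
  moreover have "respects_order P [Suc t..<m]" by (simp add: natural respects_order_sorted)
  ultimately show ?thesis by (simp add: respects_order_append respects_order_Cons)
qed

lemma avoiding_extensions_decompose:
  assumes natural: "\<And>x y. P x y \<Longrightarrow> x < y" and "0 < m" and "w \<in> avoiding_extensions m P"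
  obtains t u where "t \<in> max_positions P m" and "u \<in> avoiding_extensions t P"
    and "w = u @ m # [Suc t..<m]"
proof -
  have dist: "distinct w" and perm: "set w = {1..m}" and resp: "respects_order P w"
    and av: "avoids_231_321 w"
    using \<open>w \<in> avoiding_extensions m P\<close> by (auto simp: avoiding_extensions_def linear_extensions_eq)
  obtain u v where w: "w = u @ m # v" using perm \<open>0 < m\<close> split_list[of m w] by auto
  define t where "t = length u"
  have u: "set u = {1..t}" and v: "v = [Suc t..<m]"
    using avoids_231_321_max_split[of u m v] av dist perm by (simp_all add: w t_def)
  have "length w = m" using distinct_card[OF dist] perm by simp
  then have "t < m" by (simp add: w t_def)
  with resp have "respects_order P u" and "\<forall>y\<in>{Suc t..<m}. \<not> P y m"
    using respects_order_max_split[of P u t m, OF natural] by (simp_all add: w v u)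
  moreover have "avoids_231_321 u" using av by (simp add: w avoids_231_321_appendD)
  moreover have "distinct u" using dist by (simp add: w)
  ultimately show thesis
    using that[of t u] \<open>t < m\<close> u unfolding w v
    by (auto simp: max_positions_def avoiding_extensions_def linear_extensions_eq)
qed

lemma avoiding_extensions_extend:
  assumes natural: "\<And>x y. P x y \<Longrightarrow> x < y"
    and "t \<in> max_positions P m" and "u \<in> avoiding_extensions t P"
  shows "u @ m # [Suc t..<m] \<in> avoiding_extensions m P"
proof -
  have "distinct u" and u: "set u = {1..t}" and "respects_order P u" "avoids_231_321 u"
    and "t < m" and "\<forall>y\<in>{Suc t..<m}. \<not> P y m"
    using assms by (auto simp: avoiding_extensions_def linear_extensions_eq max_positions_def)
  moreover have "avoids_231_321 (u @ m # [Suc t..<m])"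
    using \<open>avoids_231_321 u\<close> u \<open>t < m\<close> by (intro avoids_231_321_max_splitI) auto
  ultimately show ?thesis
    using respects_order_max_split[of P u t m, OF natural]
    by (auto simp: avoiding_extensions_def linear_extensions_eq)
qed

lemma avoiding_extensions_max_split:
  assumes natural: "\<And>x y. P x y \<Longrightarrow> x < y" and "0 < m"
  shows "avoiding_extensions m P =
    (\<Union>t\<in>max_positions P m. (\<lambda>u. u @ m # [Suc t..<m]) ` avoiding_extensions t P)"
proof (intro equalityI subsetI)
  fix w assume "w \<in> avoiding_extensions m P"
  with assms obtain t u where "t \<in> max_positions P m" "u \<in> avoiding_extensions t P"
    and "w = u @ m # [Suc t..<m]"
    by (rule avoiding_extensions_decompose)
  then show "w \<in> (\<Union>t\<in>max_positions P m. (\<lambda>u. u @ m # [Suc t..<m]) ` avoiding_extensions t P)"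
    by blast
qed (auto intro: avoiding_extensions_extend[OF natural])

lemma finite_avoiding_extensions: "finite (avoiding_extensions n P)"
  by (rule finite_subset[OF _ finite_subset_distinct[of "{1..n}"]])
    (auto simp: avoiding_extensions_def linear_extensions_eq)

lemma avoiding_extensions_0: "avoiding_extensions 0 P = {[]}"
  by (auto simp: avoiding_extensions_def linear_extensions_eq avoids_231_321_def)

lemma card_avoiding_extensions_max_split:
  assumes natural: "\<And>x y. P x y \<Longrightarrow> x < y" and "0 < m"
  shows "card (avoiding_extensions m P) = (\<Sum>t\<in>max_positions P m. card (avoiding_extensions t P))"
proof -
  let ?ext = "\<lambda>t u. u @ m # [Suc t..<m]"
  have "card (avoiding_extensions m P) = card (\<Union>t\<in>max_positions P m. ?ext t ` avoiding_extensions t P)"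
    using avoiding_extensions_max_split[OF assms] by (rule arg_cong)
  also have "\<dots> = (\<Sum>t\<in>max_positions P m. card (?ext t ` avoiding_extensions t P))"
  proof (rule card_UN_disjoint)
    show "finite (max_positions P m)" by (simp add: max_positions_def)
    show "\<forall>t\<in>max_positions P m. finite (?ext t ` avoiding_extensions t P)"
      by (simp add: finite_avoiding_extensions)
    show "\<forall>t\<in>max_positions P m. \<forall>t'\<in>max_positions P m. t \<noteq> t' \<longrightarrow>
      ?ext t ` avoiding_extensions t P \<inter> ?ext t' ` avoiding_extensions t' P = {}"
    proof (intro ballI impI)
      fix t t' assume "t \<in> max_positions P m" "t' \<in> max_positions P m" "t \<noteq> t'"
      then have "t < m" "t' < m" "[Suc t..<m] \<noteq> [Suc t'..<m]"
        by (auto simp: max_positions_def dest: arg_cong[where f = length])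
      moreover have "m \<notin> set u" if "u \<in> avoiding_extensions t P" "t < m" for u t
        using that by (auto simp: avoiding_extensions_def linear_extensions_eq)
      ultimately show "?ext t ` avoiding_extensions t P \<inter> ?ext t' ` avoiding_extensions t' P = {}"
        by (auto simp: append_Cons_eq_iff)
    qed
  qed
  also have "\<dots> = (\<Sum>t\<in>max_positions P m. card (avoiding_extensions t P))"
    by (intro sum.cong refl card_image inj_onI) simp
  finally show ?thesis .
qed

lemma A_231_321_eq_card: "A_231_321 n P = card (avoiding_extensions n P)"
proof -
  have "{w \<in> linear_extensions n P. \<not> contains_231 w \<and> \<not> contains_321 w} = avoiding_extensions n P"
    using avoids_231_321_iff by (auto simp: avoiding_extensions_def linear_extensions_eq)
  then show ?thesis by (simp add: A_231_321_def)
qed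

lemma comb_less_spine:
  assumes "1 \<le> x" and "x < y" and "y \<le> s"
  shows "comb_less s x y"
proof -
  have "Suc x \<le> y" using \<open>x < y\<close> by simp
  then show ?thesis using \<open>y \<le> s\<close>
  proof (induction y rule: dec_induct)
    case base
    then show ?case using \<open>1 \<le> x\<close> by (simp add: comb_less_def comb_cover_def tranclp.r_into_trancl)
  next
    case (step n)
    then have "comb_less s x n" and "comb_cover s n (Suc n)" using \<open>1 \<le> x\<close> by (auto simp: comb_cover_def)
    then show ?case unfolding comb_less_def by (rule tranclp.trancl_into_trancl)
  qed
qed

lemma comb_less_iff:
  "comb_less s x y \<longleftrightarrow> 1 \<le> x \<and> x \<le> s \<and> x < y \<and> (y \<le> s \<or> x + s \<le> y \<and> y \<le> 2 * s)"
proof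
  assume "comb_less s x y"
  then show "1 \<le> x \<and> x \<le> s \<and> x < y \<and> (y \<le> s \<or> x + s \<le> y \<and> y \<le> 2 * s)"
    unfolding comb_less_def by (induction rule: tranclp_induct) (auto simp: comb_cover_def)
next
  assume rhs: "1 \<le> x \<and> x \<le> s \<and> x < y \<and> (y \<le> s \<or> x + s \<le> y \<and> y \<le> 2 * s)"
  show "comb_less s x y"
  proof (cases "y \<le> s")
    case True
    then show ?thesis using rhs comb_less_spine by blast
  next
    case False
    then have leg: "comb_cover s (y - s) y" using rhs by (auto simp: comb_cover_def)
    show ?thesis
    proof (cases "x = y - s")
      case True
      then show ?thesis using leg by (simp add: comb_less_def tranclp.r_into_trancl)
    next
      case False
      then have "comb_less s x (y - s)" using rhs \<open>\<not> y \<le> s\<close> by (intro comb_less_spine) auto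
      then show ?thesis using leg unfolding comb_less_def by (rule tranclp.trancl_into_trancl)
    qed
  qed
qed

lemma max_positions_comb_less:
  assumes "1 \<le> m" and "m \<le> 2 * s"
  shows "max_positions (comb_less s) m = (if m \<le> s then {m - 1} else {m - s..<m})"
proof (cases "m \<le> s")
  case True
  then show ?thesis using assms by (auto simp: max_positions_def comb_less_iff)
next
  case False
  have "m - s \<le> t" if "t < m" and "\<forall>y\<in>{Suc t..<m}. \<not> comb_less s y m" for t
    using that(2)[rule_format, of "Suc t"] that(1) False assms
    by (cases "Suc t < m") (auto simp: comb_less_iff)
  then show ?thesis using False assms by (auto simp: max_positions_def comb_less_iff)
qed

definition comb_count :: "nat \<Rightarrow> nat \<Rightarrow> nat" where
  "comb_count s m = (if m \<le> s then 1 else 2 ^ (m - s - 1) * (s - 1) + 1)"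

lemma comb_count_window_sum:
  assumes "s < m" and "m \<le> 2 * s"
  shows "(\<Sum>t = m - s..<m. comb_count s t) = comb_count s m"
proof -
  have "Suc s \<le> m" using \<open>s < m\<close> by simp
  then show ?thesis using \<open>m \<le> 2 * s\<close>
  proof (induction m rule: dec_induct)
    case base
    have "(\<Sum>t = 1..<Suc s. comb_count s t) = (\<Sum>t = 1..<Suc s. 1)"
      by (intro sum.cong) (auto simp: comb_count_def)
    then show ?case using base by (simp add: comb_count_def)
  next
    case (step n)
    let ?f = "comb_count s"
    have "Suc (n - s) \<le> n" using step by linarith
    have "(\<Sum>t = Suc n - s..<Suc n. ?f t) + ?f (n - s) = (\<Sum>t = Suc (n - s)..<n. ?f t) + ?f n + ?f (n - s)"
      using step.hyps \<open>Suc (n - s) \<le> n\<close> by (simp add: Suc_diff_le sum.atLeastLessThan_Suc)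
    also have "\<dots> = (\<Sum>t = n - s..<n. ?f t) + ?f n"
      using \<open>Suc (n - s) \<le> n\<close> by (simp add: sum.atLeast_Suc_lessThan)
    also have "\<dots> = 2 * ?f n"
      using step by simp
    also have "\<dots> = ?f (Suc n) + ?f (n - s)"
    proof -
      have "n - s = Suc (n - Suc s)" using step by simp
      then show ?thesis using step by (simp add: comb_count_def)
    qed
    finally show ?case by simp
  qed
qed

lemma card_avoiding_extensions_comb:
  assumes "m \<le> 2 * s"
  shows "card (avoiding_extensions m (comb_less s)) = comb_count s m"
  using assms
proof (induction m rule: less_induct)
  case (less m)
  show ?case
  proof (cases "m = 0")
    case True
    then show ?thesis by (simp add: avoiding_extensions_0 comb_count_def)
  next
    case False
    then have "0 < m" by simp
    have natural: "comb_less s x y \<Longrightarrow> x < y" for x y by (simp add: comb_less_iff)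
    have "card (avoiding_extensions m (comb_less s)) =
      (\<Sum>t\<in>max_positions (comb_less s) m. card (avoiding_extensions t (comb_less s)))"
      using \<open>0 < m\<close> by (simp add: card_avoiding_extensions_max_split natural)
    also have "\<dots> = (\<Sum>t\<in>max_positions (comb_less s) m. comb_count s t)"
      using less by (intro sum.cong) (auto simp: max_positions_def)
    also have "\<dots> = comb_count s m"
    proof (cases "m \<le> s")
      case True
      then show ?thesis using \<open>0 < m\<close> less.prems by (simp add: max_positions_comb_less comb_count_def)
    next
      case False
      then show ?thesis using less.prems by (simp add: max_positions_comb_less comb_count_window_sum)
    qed
    finally show ?thesis .
  qed
qed

theorem mainTheorem11:
  fixes s :: nat
  assumes "s \<ge> 1"
  shows "A_231_321 (2 * s) (comb_less s) = 2 ^ (s - 1) * (s - 1) + 1"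
proof -
  have "A_231_321 (2 * s) (comb_less s) = comb_count s (2 * s)"
    by (simp add: A_231_321_eq_card card_avoiding_extensions_comb)
  also have "\<dots> = 2 ^ (s - 1) * (s - 1) + 1"
    using assms by (simp add: comb_count_def)
  finally show ?thesis .
qed

end
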